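(* Let $A\subseteq[n]^2$ satisfy $|\{v\in[n]:(u,v)\in A\}|=T$ for every $u\in[n]$, and set $S=n-2T-2$. With the gates $\Gamma=\Gamma(A)$, $\Gamma_\uparrow=\Gamma_\uparrow(A)$ and $\Phi$ defined below, for every $x\in\{0,1\}^{4n}$ satisfying $\varphi_{one}(x)$, $$\frac{\mathrm{Sig}(\Gamma_\uparrow,x)-\mathrm{Sig}(\Gamma,x)-S\cdot\mathrm{Sig}(\Phi,x)}{4}=[\varphi_{prop}(x)\wedge(x_W,x_N)\in A].$$
   Context: All gates share the grid structure: vertices $b_{i,j}$, $(i,j)\in[n]^2$, the south edge of $b_{i,j}$ equals the north edge of $b_{i+1,j}$, the east edge of $b_{i,j}$ equals the west edge of $b_{i,j+1}$; $4n$ dangling edges ordered as north edges of the top row, east edges of the last column, south edges of the bottom row, west edges of the first column; $x=x_Nx_Ex_Sx_W$, weight-one strings $0^{v-1}10^{n-v}$ identified with $v$. $\Phi$: all $b_{i,j}$ have signature $\mathtt{PASS}$, plus an extra edge of weight $-1$ joining two extra vertices of signature $\mathtt{HW}_{=1}$. $\Gamma(A)$: apices $a_1,a_2$ with $\mathtt{HW}_{=1}$; $b_\tau$ has $\mathtt{PASS}$ for $\tau\notin A$, and for $\tau\in A$ is joined to $a_1,a_2$ (5th, 6th edges) and has $\mathtt{PRE}$. $\Gamma_\uparrow(A)$: $\Gamma(A)$ with an extra row of $n$ vertices above row $1$ and below row $n$, inserted into the columns (the outermost new edges becoming the northern/southern dangling edges), each new vertex joined to $a_1,a_2$ with signature $h(a,c,z_5,z_6)=\mathtt{PRE}(a0c0z_5z_6)$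 on (north, south, $a_1$-edge, $a_2$-edge). Weights $1$ unless stated. $\mathtt{HW}_{=1}$: $1$ iff exactly one incident edge active. $\mathtt{PASS}(1111)=-1$, $\mathtt{PASS}(0000)=\mathtt{PASS}(0101)=\mathtt{PASS}(1010)=1$, else $0$ (bits north, east, south, west); $\mathtt{PRE}(x00)=\mathtt{PASS}(x)$, $\mathtt{PRE}(xy)=1$ for $xy\in\{101011,111111,100001,110101,001010,011110\}$, else $0$. $\varphi_{one}(x)\equiv\mathrm{hw}(x_N)=\mathrm{hw}(x_W)=1$; $\varphi_{prop}(x)\equiv x_N=x_S\wedge x_W=x_E$; $[\cdot]$ is the Iverson bracket. $\mathrm{Sig}(\Gamma,x)=\sum_y w_\Gamma(xy)\prod_v f_v((xy)|_{I(v)})$ over assignments $y$ to non-dangling edges, $w_\Gamma$ the product of weights of active edges. *)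

theory Defs
  imports Complex_Main
begin

text \<open>Bit strings are bool lists (True = 1). PASS has bits (north, east, south, west).\<close>

fun PASS :: "bool list \<Rightarrow> int" where
  "PASS [True, True, True, True] = -1"
| "PASS [False, False, False, False] = 1"
| "PASS [False, True, False, True] = 1"
| "PASS [True, False, True, False] = 1"
| "PASS _ = 0"

definition PRE :: "bool list \<Rightarrow> int" where
  "PRE xs =
    (if length xs = 6 \<and> drop 4 xs = [False, False] then PASS (take 4 xs)
     else if xs \<in> {[True,False,True,False,True,True], [True,True,True,True,True,True],
                    [True,False,False,False,False,True], [True,True,False,True,False,True],
                    [False,False,True,False,True,False], [False,True,True,True,True,False]}
     then 1 else 0)"

definition HW1 :: "('e \<Rightarrow> bool) \<Rightarrow> 'e set \<Rightarrow> int" where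
  "HW1 \<sigma> I = (if card {e \<in> I. \<sigma> e} = 1 then 1 else 0)"

definition hsig :: "bool \<Rightarrow> bool \<Rightarrow> bool \<Rightarrow> bool \<Rightarrow> int" where
  "hsig a c z5 z6 = PRE [a, False, c, False, z5, z6]"

definition Sig :: "'e set \<Rightarrow> 'e set \<Rightarrow> ('e \<Rightarrow> int) \<Rightarrow> 'v set \<Rightarrow> ('v \<Rightarrow> ('e \<Rightarrow> bool) \<Rightarrow> int)
                   \<Rightarrow> ('e \<Rightarrow> bool) \<Rightarrow> int" where
  "Sig Inn Dang w Vs f d =
     (\<Sum>\<sigma> \<in> {\<sigma>. \<forall>e. e \<notin> Inn \<longrightarrow> \<sigma> e = d e}.
        (\<Prod>e \<in> Inn \<union> Dang. if \<sigma> e then w e else 1) * (\<Prod>v \<in> Vs. f v \<sigma>))"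

text \<open>Edges: dangling DN j (north of column j), DE i (east of row i), DS j, DW i;
  VI i j: vertical edge between rows i and i+1 in column j; HI i j: horizontal edge
  between columns j and j+1 in row i; E1 i j / E2 i j: edge from b_{i,j} to apex a1 / a2;
  XE: the extra edge of Phi.\<close>
datatype edge = DN nat | DE nat | DS nat | DW nat | VI nat nat | HI nat nat
  | E1 nat nat | E2 nat nat | XE

datatype vert = B nat nat | Ap1 | Ap2 | Y1 | Y2

definition dangling :: "nat \<Rightarrow> edge set" where
  "dangling n = DN ` {1..n} \<union> DE ` {1..n} \<union> DS ` {1..n} \<union> DW ` {1..n}"

text \<open>x = x_N x_E x_S x_W, each block listed in increasing column / row index.\<close>
fun dang :: "nat \<Rightarrow> bool list \<Rightarrow> edge \<Rightarrow> bool" where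
  "dang n x (DN j) = x ! (j - 1)"
| "dang n x (DE i) = x ! (n + i - 1)"
| "dang n x (DS j) = x ! (2 * n + j - 1)"
| "dang n x (DW i) = x ! (3 * n + i - 1)"
| "dang n x _ = False"

definition xN :: "nat \<Rightarrow> bool list \<Rightarrow> bool list" where "xN n x = take n x"
definition xE :: "nat \<Rightarrow> bool list \<Rightarrow> bool list" where "xE n x = take n (drop n x)"
definition xS :: "nat \<Rightarrow> bool list \<Rightarrow> bool list" where "xS n x = take n (drop (2*n) x)"
definition xW :: "nat \<Rightarrow> bool list \<Rightarrow> bool list" where "xW n x = take n (drop (3*n) x)"

definition hw :: "bool list \<Rightarrow> nat" where "hw s = length (filter id s)"

text \<open>weight-one string 0^{v-1} 1 0^{n-v} identified with v\<close>
definition ident :: "bool list \<Rightarrow> nat" where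
  "ident s = (THE v. 1 \<le> v \<and> v \<le> length s \<and> s ! (v - 1))"

definition phi_one :: "nat \<Rightarrow> bool list \<Rightarrow> bool" where
  "phi_one n x \<longleftrightarrow> hw (xN n x) = 1 \<and> hw (xW n x) = 1"

definition phi_prop :: "nat \<Rightarrow> bool list \<Rightarrow> bool" where
  "phi_prop n x \<longleftrightarrow> xN n x = xS n x \<and> xW n x = xE n x"

text \<open>Incident edges of grid vertex b_{i,j}, rows t..b (t top row, b bottom row).\<close>
definition nE :: "nat \<Rightarrow> nat \<Rightarrow> nat \<Rightarrow> edge" where
  "nE t i j = (if i = t then DN j else VI (i - 1) j)"
definition sE :: "nat \<Rightarrow> nat \<Rightarrow> nat \<Rightarrow> edge" where
  "sE b i j = (if i = b then DS j else VI i j)"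
definition eE :: "nat \<Rightarrow> nat \<Rightarrow> nat \<Rightarrow> edge" where
  "eE n i j = (if j = n then DE i else HI i j)"
definition wE :: "nat \<Rightarrow> nat \<Rightarrow> edge" where
  "wE i j = (if j = 1 then DW i else HI i (j - 1))"

definition grid_internal :: "nat \<Rightarrow> nat \<Rightarrow> nat \<Rightarrow> edge set" where
  "grid_internal n t b =
     {VI i j | i j. t \<le> i \<and> i < b \<and> 1 \<le> j \<and> j \<le> n}
   \<union> {HI i j | i j. 1 \<le> i \<and> i \<le> n \<and> 1 \<le> j \<and> j < n}"

definition grid_verts :: "nat \<Rightarrow> vert set" where
  "grid_verts n = {B i j | i j. 1 \<le> i \<and> i \<le> n \<and> 1 \<le> j \<and> j \<le> n}"

definition pass_bits :: "nat \<Rightarrow> nat \<Rightarrow> nat \<Rightarrow> nat \<Rightarrow> nat \<Rightarrow> (edge \<Rightarrow> bool) \<Rightarrow> bool list" where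
  "pass_bits n t b i j \<sigma> = [\<sigma> (nE t i j), \<sigma> (eE n i j), \<sigma> (sE b i j), \<sigma> (wE i j)]"

definition unit_weight :: "edge \<Rightarrow> int" where "unit_weight e = 1"

definition Phi_w :: "edge \<Rightarrow> int" where
  "Phi_w e = (if e = XE then -1 else 1)"

fun Phi_f :: "nat \<Rightarrow> vert \<Rightarrow> (edge \<Rightarrow> bool) \<Rightarrow> int" where
  "Phi_f n (B i j) \<sigma> = PASS (pass_bits n 1 n i j \<sigma>)"
| "Phi_f n Y1 \<sigma> = HW1 \<sigma> {XE}"
| "Phi_f n Y2 \<sigma> = HW1 \<sigma> {XE}"
| "Phi_f n _ \<sigma> = 1"

definition SigPhi :: "nat \<Rightarrow> bool list \<Rightarrow> int" where
  "SigPhi n x = Sig (grid_internal n 1 n \<union> {XE}) (dangling n) Phi_w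
                    (grid_verts n \<union> {Y1, Y2}) (Phi_f n) (dang n x)"

definition apex_edges1 :: "(nat \<times> nat) set \<Rightarrow> edge set" where
  "apex_edges1 P = (\<lambda>(i, j). E1 i j) ` P"
definition apex_edges2 :: "(nat \<times> nat) set \<Rightarrow> edge set" where
  "apex_edges2 P = (\<lambda>(i, j). E2 i j) ` P"

fun Gamma_f :: "nat \<Rightarrow> (nat \<times> nat) set \<Rightarrow> vert \<Rightarrow> (edge \<Rightarrow> bool) \<Rightarrow> int" where
  "Gamma_f n A (B i j) \<sigma> =
     (if (i, j) \<in> A then PRE (pass_bits n 1 n i j \<sigma> @ [\<sigma> (E1 i j), \<sigma> (E2 i j)])
      else PASS (pass_bits n 1 n i j \<sigma>))"
| "Gamma_f n A Ap1 \<sigma> = HW1 \<sigma> (apex_edges1 A)"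
| "Gamma_f n A Ap2 \<sigma> = HW1 \<sigma> (apex_edges2 A)"
| "Gamma_f n A _ \<sigma> = 1"

definition SigGamma :: "nat \<Rightarrow> (nat \<times> nat) set \<Rightarrow> bool list \<Rightarrow> int" where
  "SigGamma n A x = Sig (grid_internal n 1 n \<union> apex_edges1 A \<union> apex_edges2 A) (dangling n)
                        unit_weight (grid_verts n \<union> {Ap1, Ap2}) (Gamma_f n A) (dang n x)"

text \<open>Extra rows 0 (above row 1) and n+1 (below row n).\<close>
definition up_set :: "nat \<Rightarrow> (nat \<times> nat) set" where
  "up_set n = {(i, j). (i = 0 \<or> i = n + 1) \<and> 1 \<le> j \<and> j \<le> n}"

fun GammaUp_f :: "nat \<Rightarrow> (nat \<times> nat) set \<Rightarrow> vert \<Rightarrow> (edge \<Rightarrow> bool) \<Rightarrow> int" where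
  "GammaUp_f n A (B i j) \<sigma> =
     (if i = 0 \<or> i = n + 1 then
        hsig (\<sigma> (nE 0 i j)) (\<sigma> (sE (n + 1) i j)) (\<sigma> (E1 i j)) (\<sigma> (E2 i j))
      else if (i, j) \<in> A then PRE (pass_bits n 0 (n + 1) i j \<sigma> @ [\<sigma> (E1 i j), \<sigma> (E2 i j)])
      else PASS (pass_bits n 0 (n + 1) i j \<sigma>))"
| "GammaUp_f n A Ap1 \<sigma> = HW1 \<sigma> (apex_edges1 (A \<union> up_set n))"
| "GammaUp_f n A Ap2 \<sigma> = HW1 \<sigma> (apex_edges2 (A \<union> up_set n))"
| "GammaUp_f n A _ \<sigma> = 1"

definition SigGammaUp :: "nat \<Rightarrow> (nat \<times> nat) set \<Rightarrow> bool list \<Rightarrow> int" where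
  "SigGammaUp n A x =
     Sig (grid_internal n 0 (n + 1) \<union> apex_edges1 (A \<union> up_set n) \<union> apex_edges2 (A \<union> up_set n))
         (dangling n) unit_weight
         (grid_verts n \<union> (\<lambda>(i, j). B i j) ` up_set n \<union> {Ap1, Ap2}) (GammaUp_f n A) (dang n x)"

end

(*
  Every vertex signature of the three gates is an instance of one local rule: the horizontal
  wire passes through, the vertical wire flips exactly where one of the two apex edges is
  active, and an apex-free crossing of two active wires has sign -1.  Once the two apex edges
  (one for each HW_{=1} apex) are chosen, the whole assignment is forced, so every signature is
  a sum, over pairs of apex positions, of a sign.  With the north and west boundaries one-hot
  at column c and row r this sign is explicit.  In Sig(Gamma_up) - Sig(Gamma) the pairs inside
  the grid cancel; a pair with one apex in an extra row contributes +-2 only along row r, which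
  sums to 4[(r,c) in A] - 2T; the pairs inside the extra rows give (n - 2) Sig(Phi), and
  Sig(Phi) = 1 exactly when the east and south boundaries copy the west and north ones.
*)

theory Submission
  imports Defs
begin

definition cell_sig :: "bool \<Rightarrow> bool \<Rightarrow> bool \<Rightarrow> bool \<Rightarrow> bool \<Rightarrow> bool \<Rightarrow> int" where
  "cell_sig N E S W z5 z6 =
     (if E = W \<and> S = (N \<noteq> (z5 \<noteq> z6)) \<and> (z6 \<longrightarrow> N) \<and> (z5 \<and> \<not> z6 \<longrightarrow> \<not> N)
      then (if N \<and> W \<and> \<not> z5 \<and> \<not> z6 then -1 else 1) else 0)"

lemma PASS_eq_cell_sig: "PASS [N, E, S, W] = cell_sig N E S W False False"
  by (cases N; cases E; cases S; cases W) (simp_all add: cell_sig_def)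

lemma PRE_eq_cell_sig: "PRE [N, E, S, W, z5, z6] = cell_sig N E S W z5 z6"
  by (cases N; cases E; cases S; cases W; cases z5; cases z6) (simp_all add: cell_sig_def PRE_def)

lemma hsig_eq_cell_sig: "hsig N S z5 z6 = cell_sig N False S False z5 z6"
  by (simp add: hsig_def PRE_eq_cell_sig)

text \<open>Rows outside \<open>1..n\<close> (the extra rows of Gamma_up) have no horizontal wire.\<close>

definition cell_val :: "nat \<Rightarrow> nat \<Rightarrow> nat \<Rightarrow> nat \<Rightarrow> nat \<Rightarrow> (edge \<Rightarrow> bool) \<Rightarrow> int" where
  "cell_val n t b i j \<sigma> =
     cell_sig (\<sigma> (nE t i j)) (1 \<le> i \<and> i \<le> n \<and> \<sigma> (eE n i j)) (\<sigma> (sE b i j))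
              (1 \<le> i \<and> i \<le> n \<and> \<sigma> (wE i j)) (\<sigma> (E1 i j)) (\<sigma> (E2 i j))"

definition grid_prod :: "nat \<Rightarrow> nat \<Rightarrow> nat \<Rightarrow> (edge \<Rightarrow> bool) \<Rightarrow> int" where
  "grid_prod n t b \<sigma> = (\<Prod>(i, j)\<in>{t..b} \<times> {1..n}. cell_val n t b i j \<sigma>)"

definition inner_edges :: "nat \<Rightarrow> nat \<Rightarrow> nat \<Rightarrow> (nat \<times> nat) set \<Rightarrow> bool \<Rightarrow> edge set" where
  "inner_edges n t b P xe =
     grid_internal n t b \<union> apex_edges1 P \<union> apex_edges2 P \<union> (if xe then {XE} else {})"

definition assignments ::
    "nat \<Rightarrow> nat \<Rightarrow> nat \<Rightarrow> (nat \<times> nat) set \<Rightarrow> bool \<Rightarrow> bool list \<Rightarrow> (edge \<Rightarrow> bool) set" where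
  "assignments n t b P xe x = {\<sigma>. \<forall>e. e \<notin> inner_edges n t b P xe \<longrightarrow> \<sigma> e = dang n x e}"

lemma mem_inner_edges [simp]:
  "VI i j \<in> inner_edges n t b P xe \<longleftrightarrow> t \<le> i \<and> i < b \<and> 1 \<le> j \<and> j \<le> n"
  "HI i j \<in> inner_edges n t b P xe \<longleftrightarrow> 1 \<le> i \<and> i \<le> n \<and> 1 \<le> j \<and> j < n"
  "E1 i j \<in> inner_edges n t b P xe \<longleftrightarrow> (i, j) \<in> P"
  "E2 i j \<in> inner_edges n t b P xe \<longleftrightarrow> (i, j) \<in> P"
  "XE \<in> inner_edges n t b P xe \<longleftrightarrow> xe"
  "DN k \<notin> inner_edges n t b P xe" "DE k \<notin> inner_edges n t b P xe"
  "DS k \<notin> inner_edges n t b P xe" "DW k \<notin> inner_edges n t b P xe"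
  by (auto simp: inner_edges_def grid_internal_def apex_edges1_def apex_edges2_def)

lemma finite_inner_edges: "finite P \<Longrightarrow> finite (inner_edges n t b P xe)"
proof -
  assume "finite P"
  have "grid_internal n t b \<subseteq>
      (\<lambda>(i, j). VI i j) ` ({t..b} \<times> {1..n}) \<union> (\<lambda>(i, j). HI i j) ` ({1..n} \<times> {1..n})"
    by (auto simp: grid_internal_def)
  then have "finite (grid_internal n t b)" by (rule finite_subset) auto
  with \<open>finite P\<close> show ?thesis by (simp add: inner_edges_def apex_edges1_def apex_edges2_def)
qed

lemma finite_assignments:
  assumes "finite P"
  shows "finite (assignments n t b P xe x)"
proof -
  let ?I = "inner_edges n t b P xe"
  have "assignments n t b P xe x \<subseteq> (\<lambda>S e. if e \<in> ?I then e \<in> S else dang n x e) ` Pow ?I"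
  proof
    fix \<sigma> assume "\<sigma> \<in> assignments n t b P xe x"
    then have "\<sigma> = (\<lambda>e. if e \<in> ?I then e \<in> {e \<in> ?I. \<sigma> e} else dang n x e)"
      by (auto simp: assignments_def)
    then show "\<sigma> \<in> (\<lambda>S e. if e \<in> ?I then e \<in> S else dang n x e) ` Pow ?I" by blast
  qed
  moreover have "finite (Pow ?I)" using finite_inner_edges[OF assms] by simp
  ultimately show ?thesis by (meson finite_imageI finite_subset)
qed

text \<open>The vertical wire of column \<open>j\<close> after crossing \<open>k\<close> rows, starting from row \<open>t\<close>.\<close>

fun col_val :: "nat \<Rightarrow> nat \<Rightarrow> bool list \<Rightarrow> (nat \<Rightarrow> nat \<Rightarrow> bool) \<Rightarrow> (nat \<Rightarrow> nat \<Rightarrow> bool)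
    \<Rightarrow> nat \<Rightarrow> nat \<Rightarrow> bool" where
  "col_val n t x z5 z6 j 0 = dang n x (DN j)"
| "col_val n t x z5 z6 j (Suc k) = (col_val n t x z5 z6 j k \<noteq> (z5 (t + k) j \<noteq> z6 (t + k) j))"

definition config :: "nat \<Rightarrow> nat \<Rightarrow> nat \<Rightarrow> bool list \<Rightarrow> (nat \<Rightarrow> nat \<Rightarrow> bool) \<Rightarrow> (nat \<Rightarrow> nat \<Rightarrow> bool)
    \<Rightarrow> bool \<Rightarrow> edge \<Rightarrow> bool" where
  "config n t b x z5 z6 xe e = (case e of
      VI i j \<Rightarrow> t \<le> i \<and> i < b \<and> 1 \<le> j \<and> j \<le> n \<and> col_val n t x z5 z6 j (Suc i - t)
    | HI i j \<Rightarrow> 1 \<le> i \<and> i \<le> n \<and> 1 \<le> j \<and> j < n \<and> dang n x (DW i)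
    | E1 i j \<Rightarrow> z5 i j | E2 i j \<Rightarrow> z6 i j | XE \<Rightarrow> xe | _ \<Rightarrow> dang n x e)"

lemma cell_val_nonzero_D:
  assumes "cell_val n t b i j \<sigma> \<noteq> 0"
  shows "\<sigma> (sE b i j) = (\<sigma> (nE t i j) \<noteq> (\<sigma> (E1 i j) \<noteq> \<sigma> (E2 i j)))"
    and "1 \<le> i \<Longrightarrow> i \<le> n \<Longrightarrow> \<sigma> (eE n i j) = \<sigma> (wE i j)"
  using assms by (auto simp: cell_val_def cell_sig_def split: if_splits)

lemma assignment_eq_config:
  assumes \<sigma>: "\<sigma> \<in> assignments n t b P xe x" and "t \<le> 1" "n \<le> b"
    and nonzero: "\<And>i j. t \<le> i \<Longrightarrow> i \<le> b \<Longrightarrow> 1 \<le> j \<Longrightarrow> j \<le> n \<Longrightarrow> cell_val n t b i j \<sigma> \<noteq> 0"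
  shows "\<sigma> = config n t b x (\<lambda>i j. \<sigma> (E1 i j)) (\<lambda>i j. \<sigma> (E2 i j)) (\<sigma> XE)"
proof -
  let ?col = "col_val n t x (\<lambda>i j. \<sigma> (E1 i j)) (\<lambda>i j. \<sigma> (E2 i j))"
  have outer: "\<And>e. e \<notin> inner_edges n t b P xe \<Longrightarrow> \<sigma> e = dang n x e"
    using \<sigma> by (auto simp: assignments_def)
  have vertical: "\<sigma> (VI (t + k) j) = ?col j (Suc k)" if "1 \<le> j" "j \<le> n" "t + k < b" for j k
    using that(3)
  proof (induction k)
    case 0
    then show ?case
      using cell_val_nonzero_D(1)[OF nonzero[of t j]] that by (simp add: nE_def sE_def outer)
  next
    case (Suc k)
    then show ?case
      using cell_val_nonzero_D(1)[OF nonzero[of "t + Suc k" j]] that by (simp add: nE_def sE_def)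
  qed
  have horizontal: "\<sigma> (HI i j) = dang n x (DW i)" if "1 \<le> i" "i \<le> n" "1 \<le> j" "j < n" for i j
    using that(3,4)
  proof (induction j)
    case (Suc j)
    then show ?case
      using cell_val_nonzero_D(2)[OF nonzero[of i "Suc j"]] that assms(2,3)
      by (cases "j = 0") (auto simp: eE_def wE_def outer)
  qed simp
  show ?thesis
  proof
    fix e
    show "\<sigma> e = config n t b x (\<lambda>i j. \<sigma> (E1 i j)) (\<lambda>i j. \<sigma> (E2 i j)) (\<sigma> XE) e"
    proof (cases e)
      case (VI i j)
      then show ?thesis
        using vertical[of j "i - t"] outer[of e]
        by (cases "t \<le> i \<and> i < b \<and> 1 \<le> j \<and> j \<le> n") (auto simp: config_def Suc_diff_le)
    next
      case (HI i j)
      then show ?thesis using horizontal[of i j] outer[of e] by (auto simp: config_def)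
    qed (auto simp: config_def outer)
  qed
qed

lemma prod_sign_or_zero:
  assumes "finite X"
  shows "(\<Prod>p\<in>X. if ok p then if neg p then -1 else 1 else 0)
       = (if \<forall>p\<in>X. ok p then (-1) ^ card {p\<in>X. neg p} else (0::'a::comm_ring_1))"
  using assms
proof (induction X rule: finite_induct)
  case (insert p F)
  have "{q \<in> insert p F. neg q} = (if neg p then insert p {q\<in>F. neg q} else {q\<in>F. neg q})"
    by auto
  with insert show ?case by (auto simp: card_insert_if)
qed simp

definition cell_ok :: "nat \<Rightarrow> nat \<Rightarrow> nat \<Rightarrow> bool list \<Rightarrow> (nat \<Rightarrow> nat \<Rightarrow> bool) \<Rightarrow> (nat \<Rightarrow> nat \<Rightarrow> bool)
    \<Rightarrow> nat \<Rightarrow> nat \<Rightarrow> bool" where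
  "cell_ok n t b x z5 z6 i j \<longleftrightarrow>
     (1 \<le> i \<and> i \<le> n \<and> j = n \<longrightarrow> dang n x (DE i) = dang n x (DW i))
   \<and> (i = b \<longrightarrow> dang n x (DS j) = col_val n t x z5 z6 j (Suc (i - t)))
   \<and> (z6 i j \<longrightarrow> col_val n t x z5 z6 j (i - t))
   \<and> (z5 i j \<and> \<not> z6 i j \<longrightarrow> \<not> col_val n t x z5 z6 j (i - t))"

definition cell_neg :: "nat \<Rightarrow> nat \<Rightarrow> bool list \<Rightarrow> (nat \<Rightarrow> nat \<Rightarrow> bool) \<Rightarrow> (nat \<Rightarrow> nat \<Rightarrow> bool)
    \<Rightarrow> nat \<Rightarrow> nat \<Rightarrow> bool" where
  "cell_neg n t x z5 z6 i j \<longleftrightarrow>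
     col_val n t x z5 z6 j (i - t) \<and> (1 \<le> i \<and> i \<le> n \<and> dang n x (DW i)) \<and> \<not> z5 i j \<and> \<not> z6 i j"

lemma config_around_cell:
  assumes "t \<le> i" "i \<le> b" "1 \<le> j" "j \<le> n"
  shows "config n t b x z5 z6 xe (nE t i j) = col_val n t x z5 z6 j (i - t)"
    and "config n t b x z5 z6 xe (sE b i j) =
           (if i = b then dang n x (DS j) else col_val n t x z5 z6 j (Suc (i - t)))"
    and "1 \<le> i \<Longrightarrow> i \<le> n \<Longrightarrow> config n t b x z5 z6 xe (wE i j) = dang n x (DW i)"
    and "1 \<le> i \<Longrightarrow> i \<le> n \<Longrightarrow>
           config n t b x z5 z6 xe (eE n i j) =
             (if j = n then dang n x (DE i) else dang n x (DW i))"
    and "config n t b x z5 z6 xe (E1 i j) = z5 i j" "config n t b x z5 z6 xe (E2 i j) = z6 i j"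
  using assms by (auto simp: config_def nE_def sE_def eE_def wE_def Suc_diff_le)

lemma cell_sig_eq:
  assumes "(E = W) \<longleftrightarrow> horiz" and "(S = (N \<noteq> (z5 \<noteq> z6))) \<longleftrightarrow> vert"
  shows "cell_sig N E S W z5 z6 =
     (if horiz \<and> vert \<and> (z6 \<longrightarrow> N) \<and> (z5 \<and> \<not> z6 \<longrightarrow> \<not> N)
      then if N \<and> W \<and> \<not> z5 \<and> \<not> z6 then -1 else 1 else 0)"
  using assms by (simp add: cell_sig_def)

lemma cell_val_config:
  assumes "t \<le> i" "i \<le> b" "1 \<le> j" "j \<le> n"
  shows "cell_val n t b i j (config n t b x z5 z6 xe) =
     (if cell_ok n t b x z5 z6 i j then if cell_neg n t x z5 z6 i j then -1 else 1 else 0)"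
proof -
  let ?col = "col_val n t x z5 z6 j"
  have "?col (Suc (i - t)) = (?col (i - t) \<noteq> (z5 i j \<noteq> z6 i j))"
    using assms(1) by simp
  then have vert: "(config n t b x z5 z6 xe (sE b i j) = (?col (i - t) \<noteq> (z5 i j \<noteq> z6 i j)))
      \<longleftrightarrow> (i = b \<longrightarrow> dang n x (DS j) = ?col (Suc (i - t)))"
    unfolding config_around_cell(2)[OF assms] by auto
  have horiz: "((1 \<le> i \<and> i \<le> n \<and> config n t b x z5 z6 xe (eE n i j))
        = (1 \<le> i \<and> i \<le> n \<and> dang n x (DW i)))
      \<longleftrightarrow> (1 \<le> i \<and> i \<le> n \<and> j = n \<longrightarrow> dang n x (DE i) = dang n x (DW i))"
  proof (cases "1 \<le> i \<and> i \<le> n")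
    case True
    then show ?thesis
      unfolding config_around_cell(3,4)[OF assms True[THEN conjunct1] True[THEN conjunct2]]
      by (cases "j = n") simp_all
  qed (auto simp del: dang.simps)
  have west: "(1 \<le> i \<and> i \<le> n \<and> config n t b x z5 z6 xe (wE i j))
      \<longleftrightarrow> (1 \<le> i \<and> i \<le> n \<and> dang n x (DW i))"
    using config_around_cell(3)[OF assms] by auto
  show ?thesis
    unfolding cell_val_def config_around_cell(1,5,6)[OF assms] west cell_sig_eq[OF horiz vert]
    by (simp only: cell_ok_def cell_neg_def)
qed

lemma grid_prod_config:
  "grid_prod n t b (config n t b x z5 z6 xe) =
     (if \<forall>(i, j)\<in>{t..b} \<times> {1..n}. cell_ok n t b x z5 z6 i j
      then (-1) ^ card {p \<in> {t..b} \<times> {1..n}. case_prod (cell_neg n t x z5 z6) p} else 0)"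
proof -
  have "grid_prod n t b (config n t b x z5 z6 xe) =
      (\<Prod>p\<in>{t..b} \<times> {1..n}. if case_prod (cell_ok n t b x z5 z6) p
         then if case_prod (cell_neg n t x z5 z6) p then -1 else 1 else 0)"
    unfolding grid_prod_def by (rule prod.cong) (auto simp: cell_val_config)
  then show ?thesis by (simp only: prod_sign_or_zero finite_SigmaI finite_atLeastAtMost)
qed

lemma HW1_image_nonzero_D:
  assumes "HW1 \<sigma> (f ` P) \<noteq> 0" and "inj f" and outside: "\<And>p. p \<notin> P \<Longrightarrow> \<not> \<sigma> (f p)"
  shows "\<exists>a\<in>P. \<forall>p. \<sigma> (f p) = (p = a)"
proof -
  have "card {e \<in> f ` P. \<sigma> e} = 1" using assms(1) by (simp add: HW1_def split: if_splits)
  then obtain e where e: "{e' \<in> f ` P. \<sigma> e'} = {e}" by (auto simp: card_Suc_eq)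
  then obtain a where a: "a \<in> P" "e = f a" by auto
  have "\<sigma> (f p) = (p = a)" for p
  proof (cases "p \<in> P")
    case True
    then have "\<sigma> (f p) \<longleftrightarrow> f p = f a" using e a by blast
    then show ?thesis using \<open>inj f\<close> by (auto dest: injD)
  qed (use a outside in auto)
  with a show ?thesis by blast
qed

lemma HW1_image_indicator:
  assumes "a \<in> P" and "inj f" and "\<And>p. \<sigma> (f p) = (p = a)"
  shows "HW1 \<sigma> (f ` P) = 1"
proof -
  have "{e \<in> f ` P. \<sigma> e} = {f a}" using assms by auto
  then show ?thesis by (simp add: HW1_def)
qed

lemma apex_edges_image:
  "apex_edges1 P = case_prod E1 ` P" "apex_edges2 P = case_prod E2 ` P"
  "inj (case_prod E1)" "inj (case_prod E2)"
  by (auto simp: apex_edges1_def apex_edges2_def inj_def)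

lemma sum_supported_on_image:
  assumes "finite D" "g ` Q \<subseteq> D" "inj_on g Q" "\<And>\<sigma>. \<sigma> \<in> D \<Longrightarrow> s \<sigma> \<noteq> 0 \<Longrightarrow> \<sigma> \<in> g ` Q"
  shows "sum s D = (\<Sum>q\<in>Q. s (g q))"
proof -
  have "sum s D = sum s (g ` Q)"
    by (rule sum.mono_neutral_right) (use assms in auto)
  also have "\<dots> = (\<Sum>q\<in>Q. s (g q))" by (simp add: sum.reindex[OF assms(3)])
  finally show ?thesis .
qed

definition apex_config :: "nat \<Rightarrow> nat \<Rightarrow> nat \<Rightarrow> bool list \<Rightarrow> nat \<times> nat \<Rightarrow> nat \<times> nat \<Rightarrow> edge \<Rightarrow> bool" where
  "apex_config n t b x p q = config n t b x (\<lambda>i j. (i, j) = p) (\<lambda>i j. (i, j) = q) False"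

lemma apex_config_mem_assignments:
  assumes "p \<in> P" "q \<in> P"
  shows "apex_config n t b x p q \<in> assignments n t b P False x"
  unfolding assignments_def
proof (intro CollectI allI impI)
  fix e assume "e \<notin> inner_edges n t b P False"
  with assms show "apex_config n t b x p q e = dang n x e"
    by (cases e) (auto simp: apex_config_def config_def)
qed

lemma grid_prod_nonzero_D:
  assumes "grid_prod n t b \<sigma> \<noteq> 0" "t \<le> i" "i \<le> b" "1 \<le> j" "j \<le> n"
  shows "cell_val n t b i j \<sigma> \<noteq> 0"
  using assms by (auto simp: grid_prod_def prod_zero_iff)

lemma apex_config_apex_edges:
  "apex_config n t b x p q (case_prod E1 p') = (p' = p)"
  "apex_config n t b x p q (case_prod E2 p') = (p' = q)"
  by (auto simp: apex_config_def config_def split: prod.splits)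

lemma inj_on_apex_config: "inj_on (\<lambda>(p, q). apex_config n t b x p q) S"
proof (rule inj_onI, clarify)
  fix p q p' q' assume "apex_config n t b x p q = apex_config n t b x p' q'"
  then have "apex_config n t b x p q (case_prod E1 p) = apex_config n t b x p' q' (case_prod E1 p)"
    "apex_config n t b x p q (case_prod E2 q) = apex_config n t b x p' q' (case_prod E2 q)"
    by simp_all
  then show "p = p' \<and> q = q'" by (simp add: apex_config_apex_edges)
qed

lemma HW1_apex_config:
  "p \<in> P \<Longrightarrow> HW1 (apex_config n t b x p q) (apex_edges1 P) = 1"
  "q \<in> P \<Longrightarrow> HW1 (apex_config n t b x p q) (apex_edges2 P) = 1"
  unfolding apex_edges_image(1,2)
  by (rule HW1_image_indicator; simp add: apex_edges_image apex_config_apex_edges)+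

lemma assignment_eq_apex_config:
  assumes \<sigma>: "\<sigma> \<in> assignments n t b P False x" and "t \<le> 1" "n \<le> b"
    and nonzero: "grid_prod n t b \<sigma> \<noteq> 0" "HW1 \<sigma> (apex_edges1 P) \<noteq> 0" "HW1 \<sigma> (apex_edges2 P) \<noteq> 0"
  shows "\<exists>p\<in>P. \<exists>q\<in>P. \<sigma> = apex_config n t b x p q"
proof -
  have outside: "\<not> \<sigma> (case_prod E1 p)" "\<not> \<sigma> (case_prod E2 p)" if "p \<notin> P" for p
    using \<sigma> that by (auto simp: assignments_def split: prod.splits)
  obtain p where p: "p \<in> P" "\<forall>p'. \<sigma> (case_prod E1 p') = (p' = p)"
    using HW1_image_nonzero_D[of \<sigma> "case_prod E1" P] nonzero(2) outside(1)
    by (auto simp: apex_edges_image)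
  obtain q where q: "q \<in> P" "\<forall>q'. \<sigma> (case_prod E2 q') = (q' = q)"
    using HW1_image_nonzero_D[of \<sigma> "case_prod E2" P] nonzero(3) outside(2)
    by (auto simp: apex_edges_image)
  have "\<sigma> XE = False" using \<sigma> by (auto simp: assignments_def)
  moreover have "\<sigma> = config n t b x (\<lambda>i j. \<sigma> (E1 i j)) (\<lambda>i j. \<sigma> (E2 i j)) (\<sigma> XE)"
    using assignment_eq_config[OF \<sigma> assms(2,3)] grid_prod_nonzero_D[OF nonzero(1)] by blast
  ultimately have "\<sigma> = apex_config n t b x p q"
    using p(2) q(2) by (simp add: apex_config_def)
  with p q show ?thesis by blast
qed

lemma sum_assignments_apex_pairs:
  assumes "finite P" "P \<subseteq> {t..b} \<times> {1..n}" "t \<le> 1" "n \<le> b"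
    and s: "\<And>\<sigma>. \<sigma> \<in> assignments n t b P False x \<Longrightarrow>
        s \<sigma> = grid_prod n t b \<sigma> * HW1 \<sigma> (apex_edges1 P) * HW1 \<sigma> (apex_edges2 P)"
  shows "sum s (assignments n t b P False x) =
     (\<Sum>(p, q)\<in>P \<times> P. grid_prod n t b (apex_config n t b x p q))"
proof -
  let ?g = "\<lambda>(p, q). apex_config n t b x p q"
  have "sum s (assignments n t b P False x) = (\<Sum>pq\<in>P \<times> P. s (?g pq))"
  proof (rule sum_supported_on_image)
    show "finite (assignments n t b P False x)" by (rule finite_assignments[OF \<open>finite P\<close>])
    show "?g ` (P \<times> P) \<subseteq> assignments n t b P False x"
      by (auto intro: apex_config_mem_assignments)
  next
    fix \<sigma> assume \<sigma>: "\<sigma> \<in> assignments n t b P False x" and "s \<sigma> \<noteq> 0"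
    then show "\<sigma> \<in> ?g ` (P \<times> P)"
      using assignment_eq_apex_config[OF \<sigma> assms(3,4)] s by fastforce
  qed (rule inj_on_apex_config)
  also have "\<dots> = (\<Sum>(p, q)\<in>P \<times> P. grid_prod n t b (apex_config n t b x p q))"
    using s apex_config_mem_assignments HW1_apex_config by (intro sum.cong) auto
  finally show ?thesis .
qed

lemma grid_verts_eq: "grid_verts n = case_prod B ` ({1..n} \<times> {1..n})"
  by (auto simp: grid_verts_def image_iff)

lemma extended_grid_verts_eq:
  "grid_verts n \<union> (\<lambda>(i, j). B i j) ` up_set n = case_prod B ` ({0..n + 1} \<times> {1..n})"
proof -
  have "{1..n} \<times> {1..n} \<union> up_set n = {0..n + 1} \<times> {1..n}" by (auto simp: up_set_def)
  then show ?thesis unfolding grid_verts_eq image_Un[symmetric] by simp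
qed

lemma prod_vertices_grid_apexes:
  assumes cells: "\<And>i j. t \<le> i \<Longrightarrow> i \<le> b \<Longrightarrow> 1 \<le> j \<Longrightarrow> j \<le> n \<Longrightarrow> f (B i j) = cell_val n t b i j \<sigma>"
    and "\<And>i j. u \<noteq> B i j" "\<And>i j. v \<noteq> B i j" "u \<noteq> v"
  shows "(\<Prod>w\<in>case_prod B ` ({t..b} \<times> {1..n}) \<union> {u, v}. f w) = grid_prod n t b \<sigma> * f u * f v"
proof -
  have "(\<Prod>w\<in>case_prod B ` ({t..b} \<times> {1..n}). f w) = grid_prod n t b \<sigma>"
    unfolding grid_prod_def by (subst prod.reindex) (auto simp: inj_on_def cells intro: prod.cong)
  moreover have "u \<notin> case_prod B ` ({t..b} \<times> {1..n})" "v \<notin> case_prod B ` ({t..b} \<times> {1..n})"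
    using assms(2,3) by auto
  ultimately show ?thesis using \<open>u \<noteq> v\<close> by (simp add: insert_commute)
qed

lemma prod_unit_weight: "(\<Prod>e\<in>S. if \<sigma> e then unit_weight e else 1) = (1::int)"
  unfolding unit_weight_def by simp

lemma SigGamma_eq_sum_pairs:
  assumes A: "A \<subseteq> {1..n} \<times> {1..n}"
  shows "SigGamma n A x = (\<Sum>(p, q)\<in>A \<times> A. grid_prod n 1 n (apex_config n 1 n x p q))"
proof -
  have "finite A" using A finite_subset by blast
  have dom: "{\<sigma>. \<forall>e. e \<notin> grid_internal n 1 n \<union> apex_edges1 A \<union> apex_edges2 A \<longrightarrow> \<sigma> e = dang n x e}
      = assignments n 1 n A False x"
    by (simp add: assignments_def inner_edges_def)
  show ?thesis
    unfolding SigGamma_def Sig_def dom prod_unit_weight mult.left_neutral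
  proof (rule sum_assignments_apex_pairs[OF \<open>finite A\<close> A])
    fix \<sigma> assume \<sigma>: "\<sigma> \<in> assignments n 1 n A False x"
    have "Gamma_f n A (B i j) \<sigma> = cell_val n 1 n i j \<sigma>" if "1 \<le> i" "i \<le> n" for i j
    proof (cases "(i, j) \<in> A")
      case False
      then have "\<not> \<sigma> (E1 i j)" "\<not> \<sigma> (E2 i j)" using \<sigma> by (auto simp: assignments_def)
      with False that show ?thesis by (simp add: cell_val_def pass_bits_def PASS_eq_cell_sig)
    qed (use that in \<open>simp add: cell_val_def pass_bits_def PRE_eq_cell_sig\<close>)
    then show "(\<Prod>v\<in>grid_verts n \<union> {Ap1, Ap2}. Gamma_f n A v \<sigma>) =
        grid_prod n 1 n \<sigma> * HW1 \<sigma> (apex_edges1 A) * HW1 \<sigma> (apex_edges2 A)"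
      unfolding grid_verts_eq by (subst prod_vertices_grid_apexes) auto
  qed auto
qed

lemma SigGammaUp_eq_sum_pairs:
  assumes A: "A \<subseteq> {1..n} \<times> {1..n}"
  shows "SigGammaUp n A x =
     (\<Sum>(p, q)\<in>(A \<union> up_set n) \<times> (A \<union> up_set n).
        grid_prod n 0 (n + 1) (apex_config n 0 (n + 1) x p q))"
proof -
  let ?P = "A \<union> up_set n"
  have P: "?P \<subseteq> {0..n + 1} \<times> {1..n}" using A by (auto simp: up_set_def)
  then have "finite ?P" using finite_subset by blast
  have dom: "{\<sigma>. \<forall>e. e \<notin> grid_internal n 0 (n + 1) \<union> apex_edges1 ?P \<union> apex_edges2 ?P
        \<longrightarrow> \<sigma> e = dang n x e}
      = assignments n 0 (n + 1) ?P False x"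
    by (simp add: assignments_def inner_edges_def)
  show ?thesis
    unfolding SigGammaUp_def Sig_def dom prod_unit_weight mult.left_neutral extended_grid_verts_eq
  proof (rule sum_assignments_apex_pairs[OF \<open>finite ?P\<close> P])
    fix \<sigma> assume \<sigma>: "\<sigma> \<in> assignments n 0 (n + 1) ?P False x"
    have "GammaUp_f n A (B i j) \<sigma> = cell_val n 0 (n + 1) i j \<sigma>" if "i \<le> n + 1" for i j
    proof -
      consider "i = 0 \<or> i = n + 1" | "(i, j) \<in> A" | "1 \<le> i" "i \<le> n" "(i, j) \<notin> ?P"
        using \<open>i \<le> n + 1\<close> A by (force simp: up_set_def)
      then show ?thesis
      proof cases
        case 3
        then have "\<not> \<sigma> (E1 i j)" "\<not> \<sigma> (E2 i j)" using \<sigma> by (auto simp: assignments_def)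
        with 3 show ?thesis by (simp add: cell_val_def pass_bits_def PASS_eq_cell_sig up_set_def)
      qed (use A in \<open>auto simp: cell_val_def pass_bits_def PRE_eq_cell_sig hsig_eq_cell_sig\<close>)
    qed
    then show "(\<Prod>v\<in>case_prod B ` ({0..n + 1} \<times> {1..n}) \<union> {Ap1, Ap2}. GammaUp_f n A v \<sigma>) =
        grid_prod n 0 (n + 1) \<sigma> * HW1 \<sigma> (apex_edges1 ?P) * HW1 \<sigma> (apex_edges2 ?P)"
      by (subst prod_vertices_grid_apexes) auto
  qed auto
qed

lemma HW1_singleton: "HW1 \<sigma> {e} = (if \<sigma> e then 1 else 0)"
proof -
  have "{e' \<in> {e}. \<sigma> e'} = (if \<sigma> e then {e} else {})" by auto
  then show ?thesis by (simp add: HW1_def)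
qed

definition phi_config :: "nat \<Rightarrow> bool list \<Rightarrow> edge \<Rightarrow> bool" where
  "phi_config n x = config n 1 n x (\<lambda>_ _. False) (\<lambda>_ _. False) True"

lemma phi_config_mem_assignments: "phi_config n x \<in> assignments n 1 n {} True x"
  unfolding assignments_def
proof (intro CollectI allI impI)
  fix e assume "e \<notin> inner_edges n 1 n {} True"
  then show "phi_config n x e = dang n x e" by (cases e) (auto simp: phi_config_def config_def)
qed

lemma Phi_weight_phi_config:
  "(\<Prod>e\<in>grid_internal n 1 n \<union> {XE} \<union> dangling n. if phi_config n x e then Phi_w e else 1) = -1"
proof -
  let ?E = "grid_internal n 1 n \<union> {XE} \<union> dangling n"
  have "finite ?E"
    using finite_inner_edges[of "{}" n 1 n True]
    by (simp add: dangling_def inner_edges_def apex_edges1_def apex_edges2_def)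
  have "(\<Prod>e\<in>?E. if phi_config n x e then Phi_w e else 1) = (\<Prod>e\<in>?E. if e = XE then -1 else 1)"
    by (rule prod.cong) (auto simp: Phi_w_def phi_config_def config_def)
  also have "\<dots> = -1" using \<open>finite ?E\<close> by (subst prod.delta) auto
  finally show ?thesis .
qed

lemma SigPhi_eq_grid_prod:
  assumes "1 \<le> n"
  shows "SigPhi n x = - grid_prod n 1 n (phi_config n x)"
proof -
  let ?I = "grid_internal n 1 n \<union> {XE}"
  let ?D = "assignments n 1 n {} True x"
  define s where "s \<sigma> = (\<Prod>e\<in>?I \<union> dangling n. if \<sigma> e then Phi_w e else 1) *
      (\<Prod>v\<in>grid_verts n \<union> {Y1, Y2}. Phi_f n v \<sigma>)" for \<sigma>
  have s: "s \<sigma> = (\<Prod>e\<in>?I \<union> dangling n. if \<sigma> e then Phi_w e else 1)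
      * grid_prod n 1 n \<sigma> * HW1 \<sigma> {XE}^2" if \<sigma>: "\<sigma> \<in> ?D" for \<sigma>
  proof -
    have "\<not> \<sigma> (E1 i j)" "\<not> \<sigma> (E2 i j)" for i j using \<sigma> by (auto simp: assignments_def)
    then have "Phi_f n (B i j) \<sigma> = cell_val n 1 n i j \<sigma>" if "1 \<le> i" "i \<le> n" for i j
      using that by (simp add: cell_val_def pass_bits_def PASS_eq_cell_sig)
    then show ?thesis
      unfolding s_def grid_verts_eq
      by (subst prod_vertices_grid_apexes) (auto simp: power2_eq_square)
  qed
  have unique: "\<sigma> = phi_config n x" if \<sigma>: "\<sigma> \<in> ?D" and "s \<sigma> \<noteq> 0" for \<sigma>
  proof -
    have nonzero: "grid_prod n 1 n \<sigma> \<noteq> 0" "HW1 \<sigma> {XE} \<noteq> 0"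
      using s[OF \<sigma>] \<open>s \<sigma> \<noteq> 0\<close> by auto
    then have "\<sigma> XE" by (simp add: HW1_singleton split: if_splits)
    moreover have "\<not> \<sigma> (E1 i j)" "\<not> \<sigma> (E2 i j)" for i j using \<sigma> by (auto simp: assignments_def)
    moreover have "\<sigma> = config n 1 n x (\<lambda>i j. \<sigma> (E1 i j)) (\<lambda>i j. \<sigma> (E2 i j)) (\<sigma> XE)"
      using assignment_eq_config[OF \<sigma>] grid_prod_nonzero_D[OF nonzero(1)] \<open>1 \<le> n\<close> by blast
    ultimately show ?thesis by (simp add: phi_config_def)
  qed
  have dom: "{\<sigma>. \<forall>e. e \<notin> ?I \<longrightarrow> \<sigma> e = dang n x e} = ?D"
    by (simp add: assignments_def inner_edges_def apex_edges1_def apex_edges2_def)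
  have "SigPhi n x = s (phi_config n x)"
    unfolding SigPhi_def Sig_def dom s_def[symmetric]
    using phi_config_mem_assignments unique
    by (subst sum.mono_neutral_left[of ?D "{phi_config n x}", symmetric])
      (auto intro: finite_assignments)
  then show ?thesis
    using s[OF phi_config_mem_assignments] Phi_weight_phi_config
    by (simp add: HW1_singleton phi_config_def config_def)
qed

lemma col_val_indicators:
  "col_val n t x (\<lambda>i j. (i, j) = p) (\<lambda>i j. (i, j) = q) j k =
     ((dang n x (DN j) \<noteq> (snd p = j \<and> t \<le> fst p \<and> fst p < t + k))
        \<noteq> (snd q = j \<and> t \<le> fst q \<and> fst q < t + k))"
proof (induction k)
  case (Suc k)
  have step: "(snd p' = j \<and> t \<le> fst p' \<and> fst p' < t + Suc k)
      = ((snd p' = j \<and> t \<le> fst p' \<and> fst p' < t + k) \<noteq> ((t + k, j) = p'))" for p' :: "nat \<times> nat"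
    by (cases p') auto
  show ?case unfolding col_val.simps(2) Suc.IH step[of p] step[of q] by blast
qed simp

lemma col_val_no_apex: "col_val n t x (\<lambda>_ _. False) (\<lambda>_ _. False) j k = dang n x (DN j)"
  by (induction k) auto

text \<open>The wire of column \<open>j\<close> entering row \<open>i\<close>, for the north boundary one-hot at \<open>c\<close> and
  the apex edges at \<open>p\<close> and \<open>q\<close>.\<close>

definition col_bit :: "nat \<Rightarrow> nat \<times> nat \<Rightarrow> nat \<times> nat \<Rightarrow> nat \<Rightarrow> nat \<Rightarrow> bool" where
  "col_bit c p q j i \<longleftrightarrow> ((j = c) \<noteq> (snd p = j \<and> fst p < i)) \<noteq> (snd q = j \<and> fst q < i)"

definition rows_match :: "nat \<Rightarrow> bool list \<Rightarrow> bool" where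
  "rows_match n x \<longleftrightarrow> (\<forall>i\<in>{1..n}. dang n x (DE i) = dang n x (DW i))"

definition south_at :: "nat \<Rightarrow> bool list \<Rightarrow> nat \<Rightarrow> bool" where
  "south_at n x m \<longleftrightarrow> (\<forall>j\<in>{1..n}. dang n x (DS j) = (j = m))"

definition south_flipped :: "nat \<Rightarrow> bool list \<Rightarrow> nat \<Rightarrow> nat \<Rightarrow> nat \<Rightarrow> bool" where
  "south_flipped n x c m m' \<longleftrightarrow> (\<forall>j\<in>{1..n}. dang n x (DS j) = (((j = c) \<noteq> (m = j)) \<noteq> (m' = j)))"

definition neg_cols :: "nat \<Rightarrow> nat \<Rightarrow> nat \<Rightarrow> nat \<times> nat \<Rightarrow> nat \<times> nat \<Rightarrow> nat set" where
  "neg_cols n c r p q = {j\<in>{1..n}. col_bit c p q j r \<and> (r, j) \<noteq> p \<and> (r, j) \<noteq> q}"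

definition pair_val :: "nat \<Rightarrow> bool list \<Rightarrow> nat \<Rightarrow> nat \<Rightarrow> nat \<times> nat \<Rightarrow> nat \<times> nat \<Rightarrow> int" where
  "pair_val n x c r p q =
     (if rows_match n x \<and> south_flipped n x c (snd p) (snd q) \<and> col_bit c p q (snd q) (fst q)
         \<and> (p \<noteq> q \<longrightarrow> \<not> col_bit c p q (snd p) (fst p))
      then (-1) ^ card (neg_cols n c r p q) else 0)"

lemma pair_val_Pair:
  "pair_val n x c r (k, m) (k', m') =
     (if rows_match n x \<and> south_flipped n x c m m' \<and> col_bit c (k, m) (k', m') m' k'
         \<and> ((k, m) \<noteq> (k', m') \<longrightarrow> \<not> col_bit c (k, m) (k', m') m k)
      then (-1) ^ card (neg_cols n c r (k, m) (k', m')) else 0)"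
  by (simp only: pair_val_def prod.sel)

lemma south_flipped_cancel:
  "south_flipped n x c m c = south_at n x m" "south_flipped n x c m m = south_at n x c"
  "south_flipped n x c c m = south_at n x m"
  by (auto simp: south_flipped_def south_at_def)

lemma sum_up_set: "sum f (up_set n) = (\<Sum>j\<in>{1..n}. f (0, j) + f (n + 1, j))"
proof -
  have "up_set n = Pair 0 ` {1..n} \<union> Pair (n + 1) ` {1..n}"
    by (auto simp: up_set_def)
  then have "sum f (up_set n) = sum f (Pair 0 ` {1..n}) + sum f (Pair (n + 1) ` {1..n})"
    by (simp only:) (rule sum.union_disjoint, auto)
  also have "\<dots> = (\<Sum>j\<in>{1..n}. f (0, j)) + (\<Sum>j\<in>{1..n}. f (n + 1, j))"
    by (simp add: sum.reindex inj_on_def)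
  finally show ?thesis by (simp add: sum.distrib)
qed

lemma sum_pairs_Un_disjoint:
  fixes f :: "'a \<Rightarrow> 'a \<Rightarrow> 'b::comm_monoid_add"
  assumes "finite A" "finite U" "A \<inter> U = {}"
  shows "(\<Sum>(p, q)\<in>(A \<union> U) \<times> (A \<union> U). f p q) =
     (\<Sum>(p, q)\<in>A \<times> A. f p q) + (\<Sum>p\<in>A. (\<Sum>u\<in>U. f p u) + (\<Sum>u\<in>U. f u p))
     + (\<Sum>(p, q)\<in>U \<times> U. f p q)"
proof -
  have Un: "\<And>g. sum g (A \<union> U) = sum g A + sum g U"
    by (rule sum.union_disjoint[OF assms])
  have "(\<Sum>u\<in>U. \<Sum>p\<in>A. f u p) = (\<Sum>p\<in>A. \<Sum>u\<in>U. f u p)" by (rule sum.swap)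
  then show ?thesis
    unfolding sum.cartesian_product[symmetric] Un sum.distrib by (simp add: algebra_simps)
qed

locale one_hot_boundary =
  fixes n c r :: nat and x :: "bool list"
  assumes col: "1 \<le> c" "c \<le> n" and row: "1 \<le> r" "r \<le> n"
    and north: "\<And>j. 1 \<le> j \<Longrightarrow> j \<le> n \<Longrightarrow> dang n x (DN j) = (j = c)"
    and west: "\<And>i. 1 \<le> i \<Longrightarrow> i \<le> n \<Longrightarrow> dang n x (DW i) = (i = r)"
begin

context
  fixes t b :: nat and p q :: "nat \<times> nat"
  assumes frame: "t \<le> 1" "n \<le> b" and apexes: "p \<in> {t..b} \<times> {1..n}" "q \<in> {t..b} \<times> {1..n}"
begin

lemma col_val_apex_config:
  assumes "t \<le> i" "1 \<le> j" "j \<le> n"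
  shows "col_val n t x (\<lambda>i j. (i, j) = p) (\<lambda>i j. (i, j) = q) j (i - t) = col_bit c p q j i"
    and "col_val n t x (\<lambda>i j. (i, j) = p) (\<lambda>i j. (i, j) = q) j (Suc (b - t))
           = (((j = c) \<noteq> (snd p = j)) \<noteq> (snd q = j))"
  using assms apexes north[OF assms(2,3)] by (auto simp: col_val_indicators col_bit_def)

lemma all_cell_ok_apex_iff:
  "(\<forall>(i, j)\<in>{t..b} \<times> {1..n}. cell_ok n t b x (\<lambda>i j. (i, j) = p) (\<lambda>i j. (i, j) = q) i j)
   \<longleftrightarrow> rows_match n x \<and> south_flipped n x c (snd p) (snd q) \<and> col_bit c p q (snd q) (fst q)
       \<and> (p \<noteq> q \<longrightarrow> \<not> col_bit c p q (snd p) (fst p))"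
  (is "?all \<longleftrightarrow> ?rows \<and> ?south \<and> ?at_q \<and> ?at_p")
proof
  assume ok: ?all
  have ok_at: "cell_ok n t b x (\<lambda>i j. (i, j) = p) (\<lambda>i j. (i, j) = q) i j"
    if "t \<le> i" "i \<le> b" "1 \<le> j" "j \<le> n" for i j
    using ok that by auto
  have ?rows unfolding rows_match_def
    using ok_at[of _ n] frame col by (auto simp: cell_ok_def)
  moreover have ?south unfolding south_flipped_def
    using ok_at[of b] frame col_val_apex_config(2) by (auto simp: cell_ok_def)
  moreover have ?at_q
    using ok_at[of "fst q" "snd q"] apexes col_val_apex_config(1) by (auto simp: cell_ok_def)
  moreover have ?at_p
    using ok_at[of "fst p" "snd p"] apexes col_val_apex_config(1) by (auto simp: cell_ok_def)
  ultimately show "?rows \<and> ?south \<and> ?at_q \<and> ?at_p" by blast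
next
  assume "?rows \<and> ?south \<and> ?at_q \<and> ?at_p"
  then show ?all
    using col_val_apex_config
    by (auto simp: cell_ok_def rows_match_def south_flipped_def simp del: col_val.simps dang.simps)
qed

lemma cell_neg_apex_eq:
  "{ij \<in> {t..b} \<times> {1..n}. case_prod (cell_neg n t x (\<lambda>i j. (i, j) = p) (\<lambda>i j. (i, j) = q)) ij}
     = Pair r ` neg_cols n c r p q"
  using frame row west col_val_apex_config(1)
  by (auto simp: cell_neg_def neg_cols_def simp del: col_val.simps dang.simps)

lemma grid_prod_apex_config:
  "grid_prod n t b (apex_config n t b x p q) = pair_val n x c r p q"
proof -
  have "card (Pair r ` neg_cols n c r p q) = card (neg_cols n c r p q)"
    by (rule card_image) (simp add: inj_on_def)
  then show ?thesis
    unfolding apex_config_def grid_prod_config all_cell_ok_apex_iff cell_neg_apex_eq pair_val_def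
    by auto
qed

end

lemma grid_prod_phi_config:
  "grid_prod n 1 n (phi_config n x) = (if rows_match n x \<and> south_at n x c then -1 else 0)"
proof -
  let ?ok = "cell_ok n 1 n x (\<lambda>_ _. False) (\<lambda>_ _. False)"
  have "(\<forall>(i, j)\<in>{1..n} \<times> {1..n}. ?ok i j) \<longleftrightarrow> rows_match n x \<and> south_at n x c"
  proof
    assume "\<forall>(i, j)\<in>{1..n} \<times> {1..n}. ?ok i j"
    then have "?ok i n" "?ok n i" if "1 \<le> i" "i \<le> n" for i
      using that by auto
    then show "rows_match n x \<and> south_at n x c"
      using north
      by (auto simp: cell_ok_def col_val_no_apex rows_match_def south_at_def simp del: dang.simps)
  qed (use north in
      \<open>auto simp: cell_ok_def col_val_no_apex rows_match_def south_at_def simp del: dang.simps\<close>)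
  moreover have "{ij \<in> {1..n} \<times> {1..n}. case_prod (cell_neg n 1 x (\<lambda>_ _. False) (\<lambda>_ _. False)) ij}
      = {(r, c)}"
    using north west row col by (auto simp: cell_neg_def col_val_no_apex simp del: dang.simps)
  ultimately show ?thesis unfolding phi_config_def grid_prod_config by simp
qed

lemma pair_val_inner_top:
  assumes "k \<in> {1..n}" "m \<in> {1..n}" "j \<in> {1..n}"
  shows "pair_val n x c r (k, m) (0, j) =
    (if j = c \<and> rows_match n x \<and> south_at n x m then if k < r then -1 else 1 else 0)"
proof (cases "j = c")
  case True
  then have "neg_cols n c r (k, m) (0, j) = (if k < r then {m} else {})"
    using assms by (auto simp: neg_cols_def col_bit_def)
  with True assms show ?thesis by (auto simp: pair_val_Pair col_bit_def south_flipped_cancel)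
qed (simp add: pair_val_Pair col_bit_def)

lemma pair_val_bottom_inner:
  assumes "k \<in> {1..n}" "m \<in> {1..n}" "j \<in> {1..n}"
  shows "pair_val n x c r (n + 1, j) (k, m) =
    (if m = c \<and> rows_match n x \<and> south_at n x j then if r < k then -1 else 1 else 0)"
proof (cases "m = c")
  case True
  then have "neg_cols n c r (n + 1, j) (k, m) = (if r < k then {c} else {})"
    using assms row by (auto simp: neg_cols_def col_bit_def)
  with True assms show ?thesis by (auto simp: pair_val_Pair col_bit_def south_flipped_cancel)
qed (use assms in \<open>auto simp: pair_val_Pair col_bit_def\<close>)

lemma pair_val_inner_bottom:
  assumes "k \<in> {1..n}" "m \<in> {1..n}" "j \<in> {1..n}"
  shows "pair_val n x c r (k, m) (n + 1, j) =
    (if m \<noteq> c \<and> rows_match n x \<and> (j = c \<and> south_at n x m \<or> j = m \<and> south_at n x c)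
     then if k < r then 1 else -1 else 0)"
proof (cases "m \<noteq> c \<and> (j = c \<or> j = m)")
  case True
  then have "neg_cols n c r (k, m) (n + 1, j) = (if k < r then {c, m} else {c})"
    using assms col row by (auto simp: neg_cols_def col_bit_def)
  with True assms show ?thesis by (auto simp: pair_val_Pair col_bit_def south_flipped_cancel)
qed (use assms in \<open>auto simp: pair_val_Pair col_bit_def\<close>)

lemma pair_val_top_inner:
  assumes "k \<in> {1..n}" "m \<in> {1..n}" "j \<in> {1..n}"
  shows "pair_val n x c r (0, j) (k, m) =
    (if j \<noteq> c \<and> rows_match n x \<and> (m = c \<and> south_at n x j \<or> m = j \<and> south_at n x c)
     then if r < k then 1 else -1 else 0)"
proof (cases "j \<noteq> c \<and> (m = c \<or> m = j)")
  case True
  then have "neg_cols n c r (0, j) (k, m) = (if r < k then {c, j} else {if m = c then j else c})"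
    using assms col row by (auto simp: neg_cols_def col_bit_def)
  with True assms show ?thesis by (auto simp: pair_val_Pair col_bit_def south_flipped_cancel)
qed (use assms in \<open>auto simp: pair_val_Pair col_bit_def\<close>)

lemma pair_val_top_top:
  assumes "j \<in> {1..n}" "j' \<in> {1..n}"
  shows "pair_val n x c r (0, j) (0, j') =
    (if j' = c \<and> rows_match n x \<and> south_at n x j then -1 else 0)"
proof (cases "j' = c")
  case True
  then have "neg_cols n c r (0, j) (0, j') = {j}"
    using assms row by (auto simp: neg_cols_def col_bit_def)
  with True show ?thesis by (auto simp: pair_val_Pair col_bit_def south_flipped_cancel)
qed (simp add: pair_val_Pair col_bit_def)

lemma pair_val_bottom_bottom:
  assumes "j \<in> {1..n}" "j' \<in> {1..n}"
  shows "pair_val n x c r (n + 1, j) (n + 1, j') =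
    (if j' = c \<and> rows_match n x \<and> south_at n x j then -1 else 0)"
proof (cases "j' = c")
  case True
  then have "neg_cols n c r (n + 1, j) (n + 1, j') = {c}"
    using assms col row by (auto simp: neg_cols_def col_bit_def)
  with True show ?thesis by (auto simp: pair_val_Pair col_bit_def south_flipped_cancel)
qed (simp add: pair_val_Pair col_bit_def)

lemma pair_val_top_bottom:
  assumes "j \<in> {1..n}" "j' \<in> {1..n}"
  shows "pair_val n x c r (0, j) (n + 1, j') =
    (if j \<noteq> c \<and> rows_match n x \<and> (j' = c \<and> south_at n x j \<or> j' = j \<and> south_at n x c) then 1 else 0)"
proof (cases "j \<noteq> c \<and> (j' = c \<or> j' = j)")
  case True
  then have "neg_cols n c r (0, j) (n + 1, j') = {c, j}"
    using assms col row by (auto simp: neg_cols_def col_bit_def)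
  with True show ?thesis by (auto simp: pair_val_Pair col_bit_def south_flipped_cancel)
qed (auto simp: pair_val_Pair col_bit_def)

lemma pair_val_bottom_top:
  assumes "j \<in> {1..n}" "j' \<in> {1..n}"
  shows "pair_val n x c r (n + 1, j) (0, j') =
    (if j' = c \<and> rows_match n x \<and> south_at n x j then 1 else 0)"
proof (cases "j' = c")
  case True
  then have "neg_cols n c r (n + 1, j) (0, j') = {}"
    using row by (auto simp: neg_cols_def col_bit_def)
  with True show ?thesis by (auto simp: pair_val_Pair col_bit_def south_flipped_cancel)
qed (simp add: pair_val_Pair col_bit_def)

lemma sum_pair_val_inner_extra:
  assumes "k \<in> {1..n}" "m \<in> {1..n}"
  shows "(\<Sum>u\<in>up_set n. pair_val n x c r (k, m) u) + (\<Sum>u\<in>up_set n. pair_val n x c r u (k, m)) =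
    (if rows_match n x \<and> south_at n x c \<and> k = r then if m = c then 2 else -2 else 0)"
    (is "_ = ?G")
proof -
  have column: "pair_val n x c r (k, m) (0, j) + pair_val n x c r (k, m) (n + 1, j)
      + (pair_val n x c r (0, j) (k, m) + pair_val n x c r (n + 1, j) (k, m))
      = (if j = m then ?G else 0)"
    if "j \<in> {1..n}" for j
    unfolding pair_val_inner_top[OF assms that] pair_val_inner_bottom[OF assms that]
      pair_val_top_inner[OF assms that] pair_val_bottom_inner[OF assms that]
    by (cases "j = c"; cases "j = m") auto
  have "(\<Sum>u\<in>up_set n. pair_val n x c r (k, m) u) + (\<Sum>u\<in>up_set n. pair_val n x c r u (k, m)) =
      (\<Sum>j\<in>{1..n}. pair_val n x c r (k, m) (0, j) + pair_val n x c r (k, m) (n + 1, j)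
        + (pair_val n x c r (0, j) (k, m) + pair_val n x c r (n + 1, j) (k, m)))"
    unfolding sum_up_set sum.distrib[symmetric] ..
  also have "\<dots> = (\<Sum>j\<in>{1..n}. if j = m then ?G else 0)" using column by (intro sum.cong) auto
  also have "\<dots> = ?G" using assms(2) by simp
  finally show ?thesis .
qed

lemma sum_pair_val_extra_extra:
  "(\<Sum>(p, q)\<in>up_set n \<times> up_set n. pair_val n x c r p q) =
     (if rows_match n x \<and> south_at n x c then int n - 2 else 0)"
proof -
  define Q :: int where "Q = (if rows_match n x \<and> south_at n x c then 1 else 0)"
  \<comment> \<open>Each block of four pairs splits into a term living on column \<open>j' = c\<close> and a diagonal term.\<close>
  define at_c :: "nat \<Rightarrow> int" where "at_c j = (if j = c then - Q else 0)" for j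
  define diag :: "nat \<Rightarrow> int" where "diag j = Q - (if j = c then Q else 0)" for j
  have block: "pair_val n x c r (0, j) (0, j') + pair_val n x c r (0, j) (n + 1, j')
      + (pair_val n x c r (n + 1, j) (0, j') + pair_val n x c r (n + 1, j) (n + 1, j'))
      = (if j' = c then at_c j else 0) + (if j' = j then diag j else 0)"
    if "j \<in> {1..n}" "j' \<in> {1..n}" for j j'
    unfolding pair_val_top_top[OF that] pair_val_bottom_bottom[OF that]
      pair_val_top_bottom[OF that] pair_val_bottom_top[OF that] at_c_def diag_def Q_def
    by (cases "j = c"; cases "j' = c"; cases "j' = j") auto
  have "(\<Sum>(p, q)\<in>up_set n \<times> up_set n. pair_val n x c r p q) =
      (\<Sum>p\<in>up_set n. \<Sum>q\<in>up_set n. pair_val n x c r p q)"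
    by (simp add: sum.cartesian_product split_def)
  also have "\<dots> = (\<Sum>j\<in>{1..n}. \<Sum>j'\<in>{1..n}.
      pair_val n x c r (0, j) (0, j') + pair_val n x c r (0, j) (n + 1, j')
      + (pair_val n x c r (n + 1, j) (0, j') + pair_val n x c r (n + 1, j) (n + 1, j')))"
    unfolding sum_up_set sum.distrib by (simp add: ac_simps)
  also have "\<dots> = (\<Sum>j\<in>{1..n}. \<Sum>j'\<in>{1..n}.
      (if j' = c then at_c j else 0) + (if j' = j then diag j else 0))"
    using block by (intro sum.cong) auto
  also have "\<dots> = (\<Sum>j\<in>{1..n}. at_c j + diag j)"
    using col by (intro sum.cong) (auto simp: sum.distrib)
  also have "\<dots> = int n * Q - 2 * Q"
    using col by (simp add: sum.distrib at_c_def diag_def sum_subtractf)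
  finally show ?thesis by (simp add: Q_def)
qed

lemma SigGamma_eq_sum_pair_val:
  assumes "A \<subseteq> {1..n} \<times> {1..n}"
  shows "SigGamma n A x = (\<Sum>(p, q)\<in>A \<times> A. pair_val n x c r p q)"
  unfolding SigGamma_eq_sum_pairs[OF assms]
  by (rule sum.cong) (use assms in \<open>auto intro!: grid_prod_apex_config\<close>)

lemma SigGammaUp_eq_sum_pair_val:
  assumes "A \<subseteq> {1..n} \<times> {1..n}"
  shows "SigGammaUp n A x = (\<Sum>(p, q)\<in>(A \<union> up_set n) \<times> (A \<union> up_set n). pair_val n x c r p q)"
  unfolding SigGammaUp_eq_sum_pairs[OF assms]
  by (rule sum.cong) (use assms in \<open>auto simp: up_set_def intro!: grid_prod_apex_config\<close>)

lemma SigPhi_eq: "SigPhi n x = (if rows_match n x \<and> south_at n x c then 1 else 0)"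
  using SigPhi_eq_grid_prod grid_prod_phi_config col by simp

lemma sum_pair_val_cross:
  assumes A: "A \<subseteq> {1..n} \<times> {1..n}" and T: "card {v \<in> {1..n}. (r, v) \<in> A} = T"
  shows "(\<Sum>p\<in>A. (\<Sum>u\<in>up_set n. pair_val n x c r p u) + (\<Sum>u\<in>up_set n. pair_val n x c r u p))
     = (if rows_match n x \<and> south_at n x c then 4 * of_bool ((r, c) \<in> A) - 2 * int T else 0)"
proof (cases "rows_match n x \<and> south_at n x c")
  case True
  have "finite A" using A finite_subset by blast
  have row_r: "{p\<in>A. fst p = r} = Pair r ` {v\<in>{1..n}. (r, v) \<in> A}" using A by force
  have "card {p\<in>A. fst p = r} = T"
    unfolding row_r T[symmetric] by (rule card_image) (simp add: inj_on_def)
  then have "(\<Sum>p\<in>A. if fst p = r then -2 else 0) = - 2 * int T"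
    using sum.inter_filter[OF \<open>finite A\<close>, of "\<lambda>_. -2::int" "\<lambda>p. fst p = r"] by simp
  moreover have "(\<Sum>p\<in>A. (\<Sum>u\<in>up_set n. pair_val n x c r p u) + (\<Sum>u\<in>up_set n. pair_val n x c r u p))
      = (\<Sum>p\<in>A. (if p = (r, c) then 4 else 0) + (if fst p = r then -2 else 0))"
  proof (rule sum.cong[OF refl])
    fix p assume "p \<in> A"
    then obtain k m where "p = (k, m)" "1 \<le> k" "k \<le> n" "1 \<le> m" "m \<le> n" using A by auto
    then show "(\<Sum>u\<in>up_set n. pair_val n x c r p u) + (\<Sum>u\<in>up_set n. pair_val n x c r u p)
        = (if p = (r, c) then 4 else 0) + (if fst p = r then -2 else 0)"
      using sum_pair_val_inner_extra True by simp
  qed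
  ultimately show ?thesis using True \<open>finite A\<close> by (simp add: sum.distrib)
next
  case False
  have "(\<Sum>u\<in>up_set n. pair_val n x c r p u) + (\<Sum>u\<in>up_set n. pair_val n x c r u p) = 0"
    if "p \<in> A" for p
    using that A sum_pair_val_inner_extra False by force
  then have "(\<Sum>p\<in>A. (\<Sum>u\<in>up_set n. pair_val n x c r p u) + (\<Sum>u\<in>up_set n. pair_val n x c r u p)) = 0"
    by (intro sum.neutral) blast
  with False show ?thesis by (simp only: if_False)
qed

lemma signature_combination:
  assumes A: "A \<subseteq> {1..n} \<times> {1..n}" and T: "card {v \<in> {1..n}. (r, v) \<in> A} = T"
  shows "SigGammaUp n A x - SigGamma n A x - (int n - 2 * int T - 2) * SigPhi n x
     = (if rows_match n x \<and> south_at n x c \<and> (r, c) \<in> A then 4 else 0)"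
proof -
  have "finite A" using A finite_subset by blast
  moreover have "finite (up_set n)"
    by (rule finite_subset[of _ "{0..n + 1} \<times> {1..n}"]) (auto simp: up_set_def)
  moreover have "A \<inter> up_set n = {}" using A by (auto simp: up_set_def)
  ultimately have split: "(\<Sum>(p, q)\<in>(A \<union> up_set n) \<times> (A \<union> up_set n). pair_val n x c r p q) =
      (\<Sum>(p, q)\<in>A \<times> A. pair_val n x c r p q)
      + (\<Sum>p\<in>A. (\<Sum>u\<in>up_set n. pair_val n x c r p u) + (\<Sum>u\<in>up_set n. pair_val n x c r u p))
      + (\<Sum>(p, q)\<in>up_set n \<times> up_set n. pair_val n x c r p q)"
    by (rule sum_pairs_Un_disjoint)
  show ?thesis
    unfolding SigGammaUp_eq_sum_pair_val[OF A] SigGamma_eq_sum_pair_val[OF A] SigPhi_eq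
      split sum_pair_val_cross[OF A T] sum_pair_val_extra_extra
    by auto
qed

end

lemma hw_eq_1_imp_one_hot:
  assumes "hw s = 1"
  obtains v where "1 \<le> v" "v \<le> length s" "\<forall>k<length s. s ! k = (k = v - 1)" "ident s = v"
proof -
  have "card {k. k < length s \<and> s ! k} = 1"
    using assms by (simp add: hw_def length_filter_conv_card)
  then obtain k0 where k0: "{k. k < length s \<and> s ! k} = {k0}" by (auto simp: card_Suc_eq)
  then have bits: "\<forall>k<length s. s ! k = (k = Suc k0 - 1)" by auto
  moreover have "k0 < length s" using k0 by auto
  moreover have "ident s = Suc k0"
    unfolding ident_def using bits \<open>k0 < length s\<close> by (intro the_equality) auto
  ultimately show ?thesis by (intro that[of "Suc k0"]) auto
qed

lemma dang_eq_blocks: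
  assumes "length x = 4 * n" "1 \<le> j" "j \<le> n"
  shows "dang n x (DN j) = xN n x ! (j - 1)" "dang n x (DE j) = xE n x ! (j - 1)"
    and "dang n x (DS j) = xS n x ! (j - 1)" "dang n x (DW j) = xW n x ! (j - 1)"
  using assms by (auto simp: xN_def xE_def xS_def xW_def)

lemma length_blocks:
  assumes "length x = 4 * n"
  shows "length (xN n x) = n" "length (xE n x) = n" "length (xS n x) = n" "length (xW n x) = n"
  using assms by (auto simp: xN_def xE_def xS_def xW_def)

lemma ball_atLeastAtMost_1_iff: "(\<forall>j\<in>{1..n}. P j) \<longleftrightarrow> (\<forall>k<n. P (Suc k))"
proof
  assume all: "\<forall>k<n. P (Suc k)"
  show "\<forall>j\<in>{1..n}. P j"
  proof
    fix j assume "j \<in> {1..n}"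
    then obtain k where "j = Suc k" "k < n" by (cases j) auto
    with all show "P j" by simp
  qed
qed auto

lemma phi_one_imp_one_hot_boundary:
  assumes "length x = 4 * n" "phi_one n x"
  obtains c r where "one_hot_boundary n c r x" "ident (xN n x) = c" "ident (xW n x) = r"
proof -
  obtain c where c: "1 \<le> c" "c \<le> n" "\<forall>k<n. xN n x ! k = (k = c - 1)" "ident (xN n x) = c"
    using hw_eq_1_imp_one_hot[of "xN n x"] assms by (auto simp: phi_one_def length_blocks)
  obtain r where r: "1 \<le> r" "r \<le> n" "\<forall>k<n. xW n x ! k = (k = r - 1)" "ident (xW n x) = r"
    using hw_eq_1_imp_one_hot[of "xW n x"] assms by (auto simp: phi_one_def length_blocks)
  have "one_hot_boundary n c r x"
  proof
    show "dang n x (DN j) = (j = c)" if "1 \<le> j" "j \<le> n" for j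
      using c(1) c(3)[rule_format, of "j - 1"] dang_eq_blocks(1)[OF assms(1) that] that
      by (auto simp del: dang.simps)
    show "dang n x (DW i) = (i = r)" if "1 \<le> i" "i \<le> n" for i
      using r(1) r(3)[rule_format, of "i - 1"] dang_eq_blocks(4)[OF assms(1) that] that
      by (auto simp del: dang.simps)
  qed (use c r in auto)
  with c r that show ?thesis by blast
qed

lemma (in one_hot_boundary) phi_prop_iff:
  assumes "length x = 4 * n"
  shows "phi_prop n x \<longleftrightarrow> rows_match n x \<and> south_at n x c"
proof -
  have blocks: "xN n x ! k = (Suc k = c)" "xS n x ! k = dang n x (DS (Suc k))"
    "xE n x ! k = dang n x (DE (Suc k))" "xW n x ! k = dang n x (DW (Suc k))" if "k < n" for k
    using north[of "Suc k"] dang_eq_blocks[OF assms, of "Suc k"] that by (simp_all del: dang.simps)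
  have "xN n x = xS n x \<longleftrightarrow> south_at n x c"
    unfolding south_at_def ball_atLeastAtMost_1_iff list_eq_iff_nth_eq length_blocks[OF assms]
    by (auto simp: blocks simp del: dang.simps)
  moreover have "xW n x = xE n x \<longleftrightarrow> rows_match n x"
    unfolding rows_match_def ball_atLeastAtMost_1_iff list_eq_iff_nth_eq length_blocks[OF assms]
    by (auto simp: blocks simp del: dang.simps)
  ultimately show ?thesis unfolding phi_prop_def by blast
qed

theorem mainTheorem14:
  fixes n T :: nat and A :: "(nat \<times> nat) set" and x :: "bool list"
  assumes "A \<subseteq> {1..n} \<times> {1..n}"
    and "\<forall>u \<in> {1..n}. card {v \<in> {1..n}. (u, v) \<in> A} = T"
    and "length x = 4 * n"
    and "phi_one n x"
  shows "real_of_int (SigGammaUp n A x - SigGamma n A x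
            - (int n - 2 * int T - 2) * SigPhi n x) / 4
         = (if phi_prop n x \<and> (ident (xW n x), ident (xN n x)) \<in> A then 1 else 0)"
proof -
  obtain c r where boundary: "one_hot_boundary n c r x"
    and ident: "ident (xN n x) = c" "ident (xW n x) = r"
    using phi_one_imp_one_hot_boundary[OF assms(3,4)] .
  interpret one_hot_boundary n c r x by (fact boundary)
  have T: "card {v \<in> {1..n}. (r, v) \<in> A} = T" using assms(2) row by simp
  show ?thesis
    unfolding signature_combination[OF assms(1) T] phi_prop_iff[OF assms(3)] ident by simp
qed

end
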